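(* In the theory $\mathfrak{T}$, the following holds for every formula $\Phi(\alpha)$ (possibly with parameters): $$\forall X\,\exists Y\,\forall\alpha\,\big(\alpha\in Y \iff \alpha\in X\wedge\Phi(\alpha)\big).$$
   Context: The theory $\mathfrak{T}$ is set up as follows. The universe consists of "things", each of which is either a set or a function on a set. Variables $\alpha,\beta,\gamma,\eta,\xi,\zeta,\dots$ range over all things and $X,Y,Z,\dots$ range over sets. For a set $X$, the symbols $f_X,g_X,F_X,\dots$ range over functions on $X$. The primitive predicates are $\alpha\in\beta$, $\alpha=\beta$, the ternary predicate $f:Y\twoheadrightarrow Z$ (read "$f$ has domain $Y$ and codomain $Z$") and the ternary predicate $f:\alpha\mapsto\beta$ (read "$f$ maps $\alpha$ to $\beta$"). Notation: $\alpha^+$ is the singleton $\{\alpha\}$ and $\langle\alpha,\beta\rangle:=\{\alpha,\{\alpha,\beta\}\}$. An ur-function is a function on a singleton $\alpha^+$. For a function $f$ and an argument $\alpha$ with a unique $\beta$ such that $f:\alpha\mapsto\beta$, this $\beta$ is written $f(\alpha)$. Axioms of $\mathfrak{T}$: - Extensionality for sets. - No function on a set is a set. - A set has no domain or codomain and maps nothing to anything. - There is an empty set $\emptyset$. - Pairing: for all $\alpha,\beta$ the set $\{\alpha,\beta\}$ exists. - Union (sum set). - Power set. - Infinity: $\omega$ is the set of finite Zermelo ordinals, where $0=\emptyset$ and $n+1=n^+$. - Regularity. - A function on a set has no elements. - (GEN-F) For nonempty $X$, every $f_X$ satisfies $f_X:Y\twoheadrightarrow Z$ for some sets $Y,Z$,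 and for each $\alpha\in Y$ there is a unique $\beta$ with $f_X:\alpha\mapsto\beta$. - $f_X$ has no domain other than $X$. - $f_X:\alpha\mapsto\beta$ implies $\alpha\in X$. - For nonempty $X$, if $f_X:X\twoheadrightarrow\beta$ then $\beta$ is the image set $f_X[X]=\{\gamma:\exists\eta\in X\,(f_X:\eta\mapsto\gamma)\}$. - (INV) For nonempty $X$ with $f_X:X\twoheadrightarrow Y$, for every $\beta$ the set $\{\alpha\in X: f_X:\alpha\mapsto\beta\}$ exists. - (EXT-F) $f_X=g_Y$ iff $X=Y$ and, for all $\alpha,\beta$, $f_X:\alpha\mapsto\beta \iff g_Y:\alpha\mapsto\beta$. - There is an inactive function $1_\emptyset$ with $1_\emptyset:\emptyset\twoheadrightarrow\emptyset$ that maps nothing. - (UFA) For all $\alpha,\beta$ there is an ur-function $f_{\alpha^+}$ with $f_{\alpha^+}:\alpha^+\twoheadrightarrow\beta^+$ and $f_{\alpha^+}:\alpha\mapsto\beta$. - (REG-F) If $f_X:X\twoheadrightarrow Y$, then for every $\alpha$, neither $f_X:f_X\mapsto\alpha$ nor $f_X:\alpha\mapsto f_X$. - (SUM-F, nonstandard, with a multiple quantifier over families) For every nonempty set $X$ and every family $(f_{\alpha^+})_{\alpha\in X}$ that assigns to each $\alpha\in X$ an ur-function $f_{\alpha^+}$ on $\alpha^+$, there exist a function $F_X$ and a set $Y$ with $F_X:X\twoheadrightarrow Y$ and $F_X:\alpha\mapsto f_{\alpha^+}(\alpha)$ for every $\alpha\in X$. *)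

theory Defs
  imports Main
begin

text \<open>Things form the type 'a.
  isSet X : X is a set;  funOn f X : f is a function on the set X;
  mem a b : a \<in> b;  dcod f Y Z : f has domain Y and codomain Z;
  mapsto f a b : f maps a to b.\<close>

definition singleton_of :: "('a \<Rightarrow> bool) \<Rightarrow> ('a \<Rightarrow> 'a \<Rightarrow> bool) \<Rightarrow> 'a \<Rightarrow> 'a \<Rightarrow> bool" where
  "singleton_of isSet mem S a \<longleftrightarrow> isSet S \<and> (\<forall>c. mem c S \<longleftrightarrow> c = a)"

definition nonempty :: "('a \<Rightarrow> 'a \<Rightarrow> bool) \<Rightarrow> 'a \<Rightarrow> bool" where
  "nonempty mem X \<longleftrightarrow> (\<exists>a. mem a X)"

definition app :: "('a \<Rightarrow> 'a \<Rightarrow> 'a \<Rightarrow> bool) \<Rightarrow> 'a \<Rightarrow> 'a \<Rightarrow> 'a" where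
  "app mapsto f a = (THE b. mapsto f a b)"

definition T_model ::
  "('a \<Rightarrow> bool) \<Rightarrow> ('a \<Rightarrow> 'a \<Rightarrow> bool) \<Rightarrow> ('a \<Rightarrow> 'a \<Rightarrow> bool)
   \<Rightarrow> ('a \<Rightarrow> 'a \<Rightarrow> 'a \<Rightarrow> bool) \<Rightarrow> ('a \<Rightarrow> 'a \<Rightarrow> 'a \<Rightarrow> bool) \<Rightarrow> bool" where
  "T_model isSet funOn mem dcod mapsto \<longleftrightarrow>
    \<comment> \<open>sorts: every thing is a set or a function on a set\<close>
    (\<forall>a. isSet a \<or> (\<exists>X. isSet X \<and> funOn a X)) \<and>
    (\<forall>f X. funOn f X \<longrightarrow> isSet X) \<and>
    \<comment> \<open>typing of the domain/codomain predicate f : Y ->> Z (Y, Z sets)\<close>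
    (\<forall>f Y Z. dcod f Y Z \<longrightarrow> isSet Y \<and> isSet Z) \<and>
    \<comment> \<open>extensionality for sets\<close>
    (\<forall>X Y. isSet X \<and> isSet Y \<and> (\<forall>a. mem a X \<longleftrightarrow> mem a Y) \<longrightarrow> X = Y) \<and>
    \<comment> \<open>no function on a set is a set\<close>
    (\<forall>f X. funOn f X \<longrightarrow> \<not> isSet f) \<and>
    \<comment> \<open>a set has no domain or codomain and maps nothing\<close>
    (\<forall>X. isSet X \<longrightarrow> (\<forall>Y Z. \<not> dcod X Y Z) \<and> (\<forall>a b. \<not> mapsto X a b)) \<and>
    \<comment> \<open>empty set\<close>
    (\<exists>E. isSet E \<and> (\<forall>a. \<not> mem a E)) \<and>
    \<comment> \<open>pairing\<close>
    (\<forall>a b. \<exists>P. isSet P \<and> (\<forall>c. mem c P \<longleftrightarrow> c = a \<or> c = b)) \<and>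
    \<comment> \<open>union\<close>
    (\<forall>X. isSet X \<longrightarrow> (\<exists>U. isSet U \<and> (\<forall>c. mem c U \<longleftrightarrow> (\<exists>Z. mem c Z \<and> mem Z X)))) \<and>
    \<comment> \<open>power set\<close>
    (\<forall>X. isSet X \<longrightarrow> (\<exists>P. isSet P \<and>
        (\<forall>c. mem c P \<longleftrightarrow> isSet c \<and> (\<forall>d. mem d c \<longrightarrow> mem d X)))) \<and>
    \<comment> \<open>infinity: omega is the set of finite Zermelo ordinals 0 = {}, n+1 = {n}\<close>
    (\<exists>W num. isSet W \<and> isSet (num 0) \<and> (\<forall>a. \<not> mem a (num 0)) \<and>
        (\<forall>n. singleton_of isSet mem (num (Suc n)) (num n)) \<and>
        (\<forall>c. mem c W \<longleftrightarrow> (\<exists>n::nat. c = num n))) \<and>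
    \<comment> \<open>regularity\<close>
    (\<forall>X. isSet X \<and> nonempty mem X \<longrightarrow> (\<exists>a. mem a X \<and> \<not> (\<exists>b. mem b a \<and> mem b X))) \<and>
    \<comment> \<open>a function on a set has no elements\<close>
    (\<forall>f X. funOn f X \<longrightarrow> (\<forall>b. \<not> mem b f)) \<and>
    \<comment> \<open>GEN-F\<close>
    (\<forall>f X. isSet X \<and> nonempty mem X \<and> funOn f X \<longrightarrow>
        (\<exists>Y Z. isSet Y \<and> isSet Z \<and> dcod f Y Z \<and> (\<forall>a. mem a Y \<longrightarrow> (\<exists>!b. mapsto f a b)))) \<and>
    \<comment> \<open>f_X has no domain other than X\<close>
    (\<forall>f X Y Z. funOn f X \<and> dcod f Y Z \<longrightarrow> Y = X) \<and>
    \<comment> \<open>f_X maps only elements of X\<close>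
    (\<forall>f X a b. funOn f X \<and> mapsto f a b \<longrightarrow> mem a X) \<and>
    \<comment> \<open>codomain of f_X on X is the image set\<close>
    (\<forall>f X b. isSet X \<and> nonempty mem X \<and> funOn f X \<and> dcod f X b \<longrightarrow>
        isSet b \<and> (\<forall>c. mem c b \<longleftrightarrow> (\<exists>e. mem e X \<and> mapsto f e c))) \<and>
    \<comment> \<open>INV\<close>
    (\<forall>f X Y. isSet X \<and> nonempty mem X \<and> funOn f X \<and> dcod f X Y \<longrightarrow>
        (\<forall>b. \<exists>S. isSet S \<and> (\<forall>a. mem a S \<longleftrightarrow> mem a X \<and> mapsto f a b))) \<and>
    \<comment> \<open>EXT-F\<close>
    (\<forall>f X g Y. funOn f X \<and> funOn g Y \<longrightarrow>
        (f = g \<longleftrightarrow> X = Y \<and> (\<forall>a b. mapsto f a b \<longleftrightarrow> mapsto g a b))) \<and>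
    \<comment> \<open>inactive function 1_empty\<close>
    (\<exists>u E. isSet E \<and> (\<forall>a. \<not> mem a E) \<and> funOn u E \<and> dcod u E E \<and> (\<forall>a b. \<not> mapsto u a b)) \<and>
    \<comment> \<open>UFA\<close>
    (\<forall>a b. \<exists>f S T. singleton_of isSet mem S a \<and> singleton_of isSet mem T b \<and>
        funOn f S \<and> dcod f S T \<and> mapsto f a b) \<and>
    \<comment> \<open>REG-F\<close>
    (\<forall>f X Y. funOn f X \<and> dcod f X Y \<longrightarrow> (\<forall>a. \<not> mapsto f f a \<and> \<not> mapsto f a f)) \<and>
    \<comment> \<open>SUM-F, with the family quantifier read as a quantifier over all HOL families\<close>
    (\<forall>X. isSet X \<and> nonempty mem X \<longrightarrow>
      (\<forall>fam :: 'a \<Rightarrow> 'a.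
        (\<forall>a. mem a X \<longrightarrow> (\<exists>S. singleton_of isSet mem S a \<and> funOn (fam a) S)) \<longrightarrow>
        (\<exists>F Y. funOn F X \<and> isSet Y \<and> dcod F X Y \<and>
           (\<forall>a. mem a X \<longrightarrow> mapsto F a (app mapsto (fam a) a)))))"

end

theory Submission
  imports Defs
begin

text \<open>Separation follows from the function axioms alone: the empty set \<open>E\<close> and \<open>{E}\<close> are distinct;
  UFA and SUM-F give a function on \<open>X\<close> sending \<open>a\<close> to \<open>E\<close> if \<open>\<Phi> a\<close> and to \<open>{E}\<close> otherwise, and
  by INV its fibre over \<open>E\<close> is a set, namely \<open>{a \<in> X. \<Phi> a}\<close>.\<close>

locale T_function_axioms =
  fixes isSet :: "'a \<Rightarrow> bool" and funOn mem :: "'a \<Rightarrow> 'a \<Rightarrow> bool"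
    and dcod mapsto :: "'a \<Rightarrow> 'a \<Rightarrow> 'a \<Rightarrow> bool"
  assumes isSet_domain_ax: "\<forall>f X. funOn f X \<longrightarrow> isSet X"
    and empty_set_ax: "\<exists>E. isSet E \<and> (\<forall>a. \<not> mem a E)"
    and pairing_ax: "\<forall>a b. \<exists>P. isSet P \<and> (\<forall>c. mem c P \<longleftrightarrow> c = a \<or> c = b)"
    and gen_f_ax: "\<forall>f X. isSet X \<and> nonempty mem X \<and> funOn f X \<longrightarrow>
        (\<exists>Y Z. isSet Y \<and> isSet Z \<and> dcod f Y Z \<and> (\<forall>a. mem a Y \<longrightarrow> (\<exists>!b. mapsto f a b)))"
    and domain_unique_ax: "\<forall>f X Y Z. funOn f X \<and> dcod f Y Z \<longrightarrow> Y = X"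
    and mem_domain_ax: "\<forall>f X a b. funOn f X \<and> mapsto f a b \<longrightarrow> mem a X"
    and inv_ax: "\<forall>f X Y. isSet X \<and> nonempty mem X \<and> funOn f X \<and> dcod f X Y \<longrightarrow>
        (\<forall>b. \<exists>S. isSet S \<and> (\<forall>a. mem a S \<longleftrightarrow> mem a X \<and> mapsto f a b))"
    and ufa_ax: "\<forall>a b. \<exists>f S T. singleton_of isSet mem S a \<and> singleton_of isSet mem T b \<and>
        funOn f S \<and> dcod f S T \<and> mapsto f a b"
    and sum_f_ax: "\<forall>X. isSet X \<and> nonempty mem X \<longrightarrow>
      (\<forall>fam :: 'a \<Rightarrow> 'a.
        (\<forall>a. mem a X \<longrightarrow> (\<exists>S. singleton_of isSet mem S a \<and> funOn (fam a) S)) \<longrightarrow>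
        (\<exists>F Y. funOn F X \<and> isSet Y \<and> dcod F X Y \<and>
           (\<forall>a. mem a X \<longrightarrow> mapsto F a (app mapsto (fam a) a))))"

lemma T_function_axioms_if_T_model:
  "T_model isSet funOn mem dcod mapsto \<Longrightarrow> T_function_axioms isSet funOn mem dcod mapsto"
  unfolding T_model_def T_function_axioms_def by (elim conjE, intro conjI) assumption+

context T_function_axioms
begin

lemma singleton_exists: "\<exists>S. singleton_of isSet mem S a"
  using pairing_ax unfolding singleton_of_def by blast

lemma mapsto_unique:
  assumes f: "funOn f X" and "mapsto f a b" and "mapsto f a c"
  shows "b = c"
proof -
  have a: "mem a X" using f \<open>mapsto f a b\<close> mem_domain_ax by blast
  with f obtain Y Z where "dcod f Y Z" "\<forall>a. mem a Y \<longrightarrow> (\<exists>!b. mapsto f a b)"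
    using gen_f_ax isSet_domain_ax unfolding nonempty_def by blast
  moreover have "Y = X" using f \<open>dcod f Y Z\<close> domain_unique_ax by blast
  ultimately show ?thesis using a assms(2,3) by blast
qed

lemma app_eqI: "funOn f X \<Longrightarrow> mapsto f a b \<Longrightarrow> app mapsto f a = b"
  unfolding app_def by (blast intro: the_equality mapsto_unique)

lemma ur_function_exists: "\<exists>f S. singleton_of isSet mem S a \<and> funOn f S \<and> app mapsto f a = b"
  using ufa_ax app_eqI by meson

lemma function_on_exists:
  assumes "isSet X" and "nonempty mem X"
  shows "\<exists>F Y. funOn F X \<and> dcod F X Y \<and> (\<forall>a. mem a X \<longrightarrow> mapsto F a (v a))"
proof -
  define fam where
    "fam a = (SOME f. \<exists>S. singleton_of isSet mem S a \<and> funOn f S \<and> app mapsto f a = v a)" for a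
  have fam: "\<exists>S. singleton_of isSet mem S a \<and> funOn (fam a) S \<and> app mapsto (fam a) a = v a" for a
    unfolding fam_def by (rule someI_ex) (rule ur_function_exists)
  then have "\<exists>F Y. funOn F X \<and> isSet Y \<and> dcod F X Y \<and>
      (\<forall>a. mem a X \<longrightarrow> mapsto F a (app mapsto (fam a) a))"
    using sum_f_ax assms by blast
  then show ?thesis using fam by metis
qed

lemma fibre_exists:
  assumes "funOn F X" and "dcod F X Y" and "nonempty mem X"
  shows "\<exists>S. isSet S \<and> (\<forall>a. mem a S \<longleftrightarrow> mem a X \<and> mapsto F a b)"
  using inv_ax isSet_domain_ax assms by blast

lemma separation:
  assumes "isSet X"
  shows "\<exists>Y. isSet Y \<and> (\<forall>a. mem a Y \<longleftrightarrow> mem a X \<and> \<Phi> a)"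
proof (cases "nonempty mem X")
  case False
  then show ?thesis using assms unfolding nonempty_def by blast
next
  case True
  obtain E where E: "isSet E" "\<forall>a. \<not> mem a E" using empty_set_ax by blast
  obtain P where P: "singleton_of isSet mem P E" using singleton_exists by blast
  have "P \<noteq> E" using P E unfolding singleton_of_def by blast
  define v where "v a = (if \<Phi> a then E else P)" for a
  obtain F Y where F: "funOn F X" "dcod F X Y" and F_v: "\<forall>a. mem a X \<longrightarrow> mapsto F a (v a)"
    using function_on_exists[OF assms True] by blast
  obtain S where S: "isSet S" "\<forall>a. mem a S \<longleftrightarrow> mem a X \<and> mapsto F a E"
    using fibre_exists[OF F True] by blast
  have "mapsto F a E \<longleftrightarrow> \<Phi> a" if "mem a X" for a
    using F_v that mapsto_unique[OF F(1)] \<open>P \<noteq> E\<close> unfolding v_def by (metis (full_types))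
  then show ?thesis using S by blast
qed

end

theorem mainTheorem3:
  fixes isSet :: "'a \<Rightarrow> bool" and funOn mem :: "'a \<Rightarrow> 'a \<Rightarrow> bool"
    and dcod mapsto :: "'a \<Rightarrow> 'a \<Rightarrow> 'a \<Rightarrow> bool"
    and \<Phi> :: "'a \<Rightarrow> bool"
  assumes "T_model isSet funOn mem dcod mapsto"
  shows "\<forall>X. isSet X \<longrightarrow> (\<exists>Y. isSet Y \<and> (\<forall>a. mem a Y \<longleftrightarrow> mem a X \<and> \<Phi> a))"
  using T_function_axioms.separation[OF T_function_axioms_if_T_model[OF assms]] by blast

end
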